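(* Let $p\notin\{2,11\}$ be a prime with $p\equiv2\pmod3$ such that all three roots of $P(X)=X^3-X^2-X-1$ lie in $\mathbb Q_p$. For each $\lambda\in\Lambda$ let $\lambda^{1/3}$ denote the unique element of $\mathbb Z_p$ whose cube is $\lambda$. Then $\sum_{\lambda\in\Lambda}c_\lambda\lambda^{1/3}=0$.
   Context: $\Lambda$ is the set of roots of $P(X)=X^3-X^2-X-1$ (here contained in $\mathbb Z_p^\times$), and $c_\lambda=\lambda P'(\lambda)^{-1}$. Since $p\equiv2\pmod 3$, every element of $\mathbb Z_p^\times$ has exactly one cube root in $\mathbb Z_p$. *)

theory Defs
  imports "HOL-Computational_Algebra.Polynomial" "HOL-Number_Theory.Number_Theory"
begin

text \<open>The p-adic integers Z_p, modelled as the inverse limit of the rings Z/p^n Z: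
  an element is a coherent sequence of residues x n in {0..<p^n}.
  Ring operations are computed componentwise modulo p^n.\<close>

definition Zp :: "nat \<Rightarrow> (nat \<Rightarrow> int) set" where
  "Zp p = {x. \<forall>n. 0 \<le> x n \<and> x n < int p ^ n \<and> x (Suc n) mod (int p ^ n) = x n}"

definition pzero :: "nat \<Rightarrow> nat \<Rightarrow> int" where
  "pzero p = (\<lambda>n. 0)"

definition pone :: "nat \<Rightarrow> nat \<Rightarrow> int" where
  "pone p = (\<lambda>n. 1 mod (int p ^ n))"

definition padd :: "nat \<Rightarrow> (nat \<Rightarrow> int) \<Rightarrow> (nat \<Rightarrow> int) \<Rightarrow> nat \<Rightarrow> int" where
  "padd p x y = (\<lambda>n. (x n + y n) mod (int p ^ n))"

definition pmul :: "nat \<Rightarrow> (nat \<Rightarrow> int) \<Rightarrow> (nat \<Rightarrow> int) \<Rightarrow> nat \<Rightarrow> int" where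
  "pmul p x y = (\<lambda>n. (x n * y n) mod (int p ^ n))"

definition psum :: "nat \<Rightarrow> ('a \<Rightarrow> nat \<Rightarrow> int) \<Rightarrow> 'a set \<Rightarrow> nat \<Rightarrow> int" where
  "psum p f A = (\<lambda>n. (\<Sum>a\<in>A. f a n) mod (int p ^ n))"

definition peval :: "nat \<Rightarrow> int poly \<Rightarrow> (nat \<Rightarrow> int) \<Rightarrow> nat \<Rightarrow> int" where
  "peval p f x = (\<lambda>n. poly f (x n) mod (int p ^ n))"

definition pinv :: "nat \<Rightarrow> (nat \<Rightarrow> int) \<Rightarrow> nat \<Rightarrow> int" where
  "pinv p x = (THE y. y \<in> Zp p \<and> pmul p x y = pone p)"

definition pcbrt :: "nat \<Rightarrow> (nat \<Rightarrow> int) \<Rightarrow> nat \<Rightarrow> int" where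
  "pcbrt p x = (THE y. y \<in> Zp p \<and> pmul p y (pmul p y y) = x)"

definition Ptrib :: "int poly" where
  "Ptrib = [:-1, -1, -1, 1:]"

definition Lam :: "nat \<Rightarrow> (nat \<Rightarrow> int) set" where
  "Lam p = {x \<in> Zp p. peval p Ptrib x = pzero p}"

text \<open>c_lambda = lambda * P'(lambda)^{-1}.\<close>
definition clam :: "nat \<Rightarrow> (nat \<Rightarrow> int) \<Rightarrow> nat \<Rightarrow> int" where
  "clam p l = pmul p l (pinv p (peval p (pderiv Ptrib) l))"

end

theory Submission
  imports Defs
begin

text \<open>Work modulo \<open>p ^ n\<close> with the roots \<open>a\<^sub>i\<close>, their cube roots \<open>b\<^sub>i\<close> and \<open>v\<^sub>i = 1 / P'(a\<^sub>i)\<close>.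
  Since \<open>P'(a\<^sub>i) = \<Prod>\<^sub>j\<^sub>\<noteq>\<^sub>i (a\<^sub>i - a\<^sub>j)\<close>, multiplying \<open>\<Sum> a\<^sub>i v\<^sub>i b\<^sub>i\<close> by
  \<open>D = (a\<^sub>1 - a\<^sub>2)(a\<^sub>2 - a\<^sub>3)(a\<^sub>3 - a\<^sub>1)\<close> and substituting \<open>a\<^sub>i = b\<^sub>i\<^sup>3\<close> gives the Vandermonde
  determinant of the \<open>b\<^sub>i\<close> times \<open>q\<^sup>2 - s b\<^sub>1b\<^sub>2b\<^sub>3\<close>, where \<open>s\<close> and \<open>q\<close> are the first two
  elementary symmetric functions of the \<open>b\<^sub>i\<close>. Cubing is a bijection on units modulo \<open>p ^ n\<close>
  because \<open>3\<close> is prime to \<open>p - 1\<close>, so \<open>b\<^sub>1b\<^sub>2b\<^sub>3 = 1\<close>, and Vieta for the \<open>b\<^sub>i\<^sup>3\<close> gives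
  \<open>s\<^sup>3 - 3sq + 2 = 0\<close> and \<open>q\<^sup>3 - 3qs + 4 = 0\<close>. Eliminating \<open>q\<close> yields
  \<open>(s\<^sup>3 - 4)(s\<^sup>6 - 17s\<^sup>3 - 2) = 0\<close>; the second factor cannot vanish modulo \<open>p\<close>, since together with
  \<open>D\<^sup>2 = -44\<close> it would make \<open>-3\<close> a square modulo \<open>p \<equiv> 2 (mod 3)\<close>. Hence \<open>s\<^sup>3 = 4\<close>, \<open>q\<^sup>3 = 2\<close>,
  so \<open>(q\<^sup>2)\<^sup>3 = s\<^sup>3\<close> and \<open>q\<^sup>2 = s\<close>.\<close>

section \<open>Cube roots of units modulo \<open>m\<close>\<close>

lemma euler_theorem_int:
  fixes z :: int
  assumes "coprime z (int m)"
  shows "[z ^ totient m = 1] (mod int m)"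
proof (cases "m \<le> 1")
  case True
  then consider "m = 0" | "m = 1" by linarith
  then show ?thesis by cases simp_all
next
  case False
  then have "residues (int m)" by (simp add: residues_def)
  then show ?thesis using residues.euler_theorem[of "int m" z] assms by simp
qed

lemma pow_cong_self:
  fixes z :: int
  assumes "coprime z (int m)" and "[e = 1] (mod totient m)"
  shows "[z ^ e = z] (mod int m)"
proof -
  have euler: "[z ^ totient m = 1] (mod int m)" using euler_theorem_int[OF assms(1)] .
  from assms(2) consider "e = 0" "totient m = 1" | k where "e = 1 + k * totient m"
    unfolding cong_to_1'_nat by blast
  then show ?thesis
  proof cases
    case 1
    then show ?thesis using euler by (simp add: cong_sym)
  next
    case 2
    have "[z * (z ^ totient m) ^ k = z * 1 ^ k] (mod int m)"
      by (intro cong_mult cong_pow cong_refl euler)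
    moreover have "z ^ e = z * (z ^ totient m) ^ k"
      using 2 by (simp add: power_add power_mult[symmetric] mult.commute)
    ultimately show ?thesis by simp
  qed
qed

lemma cube_cong_inverse_exponent:
  assumes "coprime 3 (totient m)"
  obtains k where "\<And>z :: int. coprime z (int m) \<Longrightarrow> [(z ^ 3) ^ k = z] (mod int m)"
proof -
  obtain k where "[3 * k = 1] (mod totient m)" using cong_solve_coprime_nat[OF assms] by auto
  then have "[(z ^ 3) ^ k = z] (mod int m)" if "coprime z (int m)" for z :: int
    using pow_cong_self[OF that, of "3 * k"] by (simp add: power_mult)
  then show thesis by (rule that)
qed

lemma cube_cong_cancel:
  fixes z w :: int
  assumes "coprime 3 (totient m)" and "coprime z (int m)" and "coprime w (int m)"
    and "[z ^ 3 = w ^ 3] (mod int m)"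
  shows "[z = w] (mod int m)"
proof -
  obtain k where k: "\<And>z :: int. coprime z (int m) \<Longrightarrow> [(z ^ 3) ^ k = z] (mod int m)"
    using cube_cong_inverse_exponent[OF assms(1)] by blast
  have "[(z ^ 3) ^ k = (w ^ 3) ^ k] (mod int m)" using assms(4) by (rule cong_pow)
  then show ?thesis using k[OF assms(2)] k[OF assms(3)] by (meson cong_sym cong_trans)
qed

lemma cube_root_cong_exists:
  fixes a :: int
  assumes "coprime 3 (totient m)" and "coprime a (int m)"
  shows "\<exists>z. [z ^ 3 = a] (mod int m)"
proof -
  obtain k where "\<And>z :: int. coprime z (int m) \<Longrightarrow> [(z ^ 3) ^ k = z] (mod int m)"
    using cube_cong_inverse_exponent[OF assms(1)] by blast
  then have "[(a ^ k) ^ 3 = a] (mod int m)" using assms(2)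
    by (metis power_mult mult.commute)
  then show ?thesis by blast
qed

lemma coprime_3_totient_prime_power:
  assumes "prime p" and "p mod 3 = 2"
  shows "coprime 3 (totient (p ^ n))"
proof (cases "n = 0")
  case False
  have "\<not> 3 dvd p" "\<not> 3 dvd (p - 1)" using assms(2) by presburger+
  then have "coprime (3::nat) p" "coprime (3::nat) (p - 1)"
    by (auto intro!: prime_imp_coprime)
  then show ?thesis using totient_prime_power[OF assms(1)] False by simp
qed simp

lemma coprime_prime_iff_not_dvd:
  fixes x :: int
  assumes "prime p"
  shows "coprime x (int p) \<longleftrightarrow> \<not> int p dvd x"
proof -
  have pri: "prime (int p)" using assms by simp
  then show ?thesis
    using prime_imp_coprime[OF pri] coprime_absorb_left[of "int p" x] not_prime_unit
    by (auto simp: coprime_commute)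
qed

lemma coprime_dvd_mult_cancel:
  fixes M c x :: int
  assumes "coprime c M" and "M dvd c * x"
  shows "M dvd x"
  using assms coprime_dvd_mult_right_iff[of M c x] by (simp add: coprime_commute)

lemma prime_dvd_2_3_11_product:
  assumes "prime p" and "int p dvd 2 ^ i * 3 ^ j * 11 ^ k"
  shows "p = 2 \<or> p = 3 \<or> p = 11"
proof -
  have pri: "prime (int p)" using assms(1) by simp
  have "int p dvd 2 \<or> int p dvd 3 \<or> int p dvd 11"
    using assms(2) prime_dvd_mult_iff[OF pri] prime_dvd_power[OF pri] by blast
  moreover have "prime (2::int)" "prime (3::int)" "prime (11::int)" by simp_all
  ultimately have "int p = 2 \<or> int p = 3 \<or> int p = 11"
    using pri by (metis primes_dvd_imp_eq)
  then show ?thesis by linarith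
qed

lemma prime_dvd_square_plus_3_square:
  fixes x y :: int
  assumes p: "prime p" "p mod 3 = 2" "p \<noteq> 2" and dvd: "int p dvd x ^ 2 + 3 * y ^ 2"
  shows "int p dvd y"
proof (rule ccontr)
  assume y: "\<not> int p dvd y"
  have pri: "prime (int p)" using p(1) by simp
  have "int p dvd 12 * y ^ 2"
  proof (cases "int p dvd x - y")
    case True
    have "12 * y ^ 2 = 3 * (x ^ 2 + 3 * y ^ 2) - 3 * (x - y) * (x + y)"
      by (simp add: algebra_simps power2_eq_square)
    then show ?thesis using True dvd by (metis dvd_diff dvd_mult dvd_mult2)
  next
    case False
    \<comment> \<open>\<open>x - y\<close> and \<open>2 y\<close> are cube roots of the same number, and cubing is injective modulo \<open>p\<close>\<close>
    have "(x - y) ^ 3 - (2 * y) ^ 3 = (x - 3 * y) * (x ^ 2 + 3 * y ^ 2)" by Groebner_Basis.algebra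
    then have cubes: "[(x - y) ^ 3 = (2 * y) ^ 3] (mod int (p ^ 1))"
      using dvd by (simp add: cong_iff_dvd_diff)
    have "\<not> int p dvd 2" using p prime_dvd_2_3_11_product[OF p(1), of 1 0 0] by auto
    then have "\<not> int p dvd 2 * y" using y pri by (simp add: prime_dvd_mult_iff)
    then have "coprime (x - y) (int (p ^ 1))" "coprime (2 * y) (int (p ^ 1))"
      using False
      by (simp_all only: power_one_right coprime_prime_iff_not_dvd[OF p(1)] not_False_eq_True)
    then have "[x - y = 2 * y] (mod int (p ^ 1))"
      using cube_cong_cancel[OF coprime_3_totient_prime_power[OF p(1,2)] _ _ cubes] by blast
    then have x: "int p dvd x - 3 * y" by (simp add: cong_iff_dvd_diff)
    have "12 * y ^ 2 = (x ^ 2 + 3 * y ^ 2) - (x - 3 * y) * (x + 3 * y)" by Groebner_Basis.algebra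
    then show ?thesis using x dvd by (metis dvd_diff dvd_mult2)
  qed
  then have "int p dvd 2 ^ 2 * 3 ^ 1 * 11 ^ 0"
    using y pri by (simp add: prime_dvd_mult_iff prime_dvd_power_iff)
  moreover from this have "p = 2 \<or> p = 3 \<or> p = 11" by (rule prime_dvd_2_3_11_product[OF p(1)])
  ultimately show False using p(2,3) by (elim disjE) simp_all
qed

section \<open>The \<open>p\<close>-adic integers\<close>

lemma Zp_mod_eq:
  assumes "x \<in> Zp p"
  shows "x n mod int p ^ n = x n"
  using assms unfolding Zp_def by simp

lemma Zp_cong:
  assumes "x \<in> Zp p" and "k \<le> n"
  shows "[x n = x k] (mod int p ^ k)"
  using assms(2)
proof (induction n)
  case 0
  then show ?case by simp
next
  case (Suc n)
  show ?case
  proof (cases "k = Suc n")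
    case False
    then have "k \<le> n" using Suc.prems by simp
    have "[x (Suc n) = x n] (mod int p ^ n)"
      using assms(1) Zp_mod_eq[OF assms(1), of n] unfolding Zp_def cong_def by simp
    then have "[x (Suc n) = x n] (mod int p ^ k)"
      by (rule cong_dvd_modulus) (simp add: \<open>k \<le> n\<close> le_imp_power_dvd)
    then show ?thesis using Suc.IH[OF \<open>k \<le> n\<close>] by (rule cong_trans)
  qed simp
qed

lemma Zp_eqI:
  assumes "x \<in> Zp p" and "y \<in> Zp p" and "\<And>n. [x n = y n] (mod int p ^ n)"
  shows "x = y"
proof
  fix n
  show "x n = y n"
    using assms(3)[of n] Zp_mod_eq[OF assms(1), of n] Zp_mod_eq[OF assms(2), of n]
    by (simp add: cong_def)
qed

lemma Zp_coprime:
  assumes "x \<in> Zp p" and "coprime (x 1) (int p)"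
  shows "coprime (x n) (int p ^ n)"
proof (cases "n = 0")
  case False
  have "[x 1 = x n] (mod int p)" using Zp_cong[OF assms(1), of 1 n] False by (simp add: cong_sym)
  then show ?thesis using assms(2) False by (simp add: cong_imp_coprime)
qed simp

text \<open>Evaluates the \<open>THE\<close> in the definitions of \<open>pinv\<close> and \<open>pcbrt\<close>: if the admissible residues
  \<open>R n\<close> at each level form one class modulo \<open>p ^ n\<close> and survive reduction of the level, the
  described element exists, is unique, and its \<open>n\<close>-th component is admissible.\<close>
lemma the_Zp_levelwise:
  assumes p: "p > 0"
    and ex: "\<And>n. \<exists>z. R n z"
    and one_class: "\<And>n z w. R n z \<Longrightarrow> R n w \<longleftrightarrow> [w = z] (mod int p ^ n)"
    and down: "\<And>n z. R (Suc n) z \<Longrightarrow> R n z"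
    and char: "\<And>y. y \<in> Zp p \<Longrightarrow> Q y \<longleftrightarrow> (\<forall>n. R n (y n))"
  shows "R n ((THE y. y \<in> Zp p \<and> Q y) n)"
proof -
  define y where "y n = (SOME z. R n z) mod int p ^ n" for n
  have R_some: "R n (SOME z. R n z)" for n using ex by (rule someI_ex)
  have Ry: "R n (y n)" for n
    unfolding y_def using one_class[OF R_some] by (simp add: cong_def)
  have "y \<in> Zp p"
    unfolding Zp_def
  proof (intro CollectI allI conjI)
    fix n
    show "0 \<le> y n" "y n < int p ^ n" unfolding y_def using p by simp_all
    have "[y (Suc n) = y n] (mod int p ^ n)" using one_class[OF Ry] down[OF Ry] by blast
    then show "y (Suc n) mod int p ^ n = y n" unfolding cong_def y_def by simp
  qed
  have "(THE y. y \<in> Zp p \<and> Q y) = y"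
  proof (rule the_equality)
    show "y \<in> Zp p \<and> Q y" using \<open>y \<in> Zp p\<close> char Ry by blast
  next
    fix y' assume "y' \<in> Zp p \<and> Q y'"
    then show "y' = y" using \<open>y \<in> Zp p\<close> char one_class Ry by (blast intro: Zp_eqI)
  qed
  then show ?thesis using Ry by simp
qed

lemma pinv_cong:
  assumes "p > 0" and "x \<in> Zp p" and "coprime (x 1) (int p)"
  shows "[x n * pinv p x n = 1] (mod int p ^ n)"
  unfolding pinv_def
proof (rule the_Zp_levelwise[where R = "\<lambda>n z. [x n * z = 1] (mod int p ^ n)", OF assms(1)])
  fix n
  show "\<exists>z. [x n * z = 1] (mod int p ^ n)"
    using Zp_coprime[OF assms(2,3)] cong_solve_coprime_int by blast
  fix z w assume "[x n * z = 1] (mod int p ^ n)"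
  then show "[x n * w = 1] (mod int p ^ n) \<longleftrightarrow> [w = z] (mod int p ^ n)"
    using cong_mult_lcancel[OF Zp_coprime[OF assms(2,3)]] by (metis cong_sym cong_trans)
next
  fix n z assume "[x (Suc n) * z = 1] (mod int p ^ Suc n)"
  then have "[x (Suc n) * z = 1] (mod int p ^ n)" by (rule cong_dvd_modulus) simp
  moreover have "[x n * z = x (Suc n) * z] (mod int p ^ n)"
    using Zp_cong[OF assms(2), of n "Suc n"] by (simp add: cong_sym cong_scalar_right)
  ultimately show "[x n * z = 1] (mod int p ^ n)" by (rule cong_trans[rotated])
next
  fix y assume "y \<in> Zp p"
  show "pmul p x y = pone p \<longleftrightarrow> (\<forall>n. [x n * y n = 1] (mod int p ^ n))"
    by (simp add: fun_eq_iff pmul_def pone_def cong_def)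
qed

lemma pcbrt_cong:
  assumes "prime p" and "p mod 3 = 2" and "x \<in> Zp p" and "coprime (x 1) (int p)"
  shows "[pcbrt p x n ^ 3 = x n] (mod int p ^ n)"
  unfolding pcbrt_def
proof (rule the_Zp_levelwise[where R = "\<lambda>n z. [z ^ 3 = x n] (mod int p ^ n)"])
  show "p > 0" using assms(1) by (simp add: prime_gt_0_nat)
  fix n
  have cop3: "coprime 3 (totient (p ^ n))" by (rule coprime_3_totient_prime_power[OF assms(1,2)])
  have copx: "coprime (x n) (int (p ^ n))" using Zp_coprime[OF assms(3,4)] by simp
  show "\<exists>z. [z ^ 3 = x n] (mod int p ^ n)" using cube_root_cong_exists[OF cop3 copx] by simp
  fix z w assume z: "[z ^ 3 = x n] (mod int p ^ n)"
  have cop: "coprime v (int (p ^ n))" if "[v ^ 3 = x n] (mod int p ^ n)" for v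
    using copx cong_imp_coprime[OF cong_sym[OF that]] by simp
  show "[w ^ 3 = x n] (mod int p ^ n) \<longleftrightarrow> [w = z] (mod int p ^ n)"
  proof
    assume w: "[w ^ 3 = x n] (mod int p ^ n)"
    have "[w ^ 3 = z ^ 3] (mod int (p ^ n))" using cong_trans[OF w cong_sym[OF z]] by simp
    then show "[w = z] (mod int p ^ n)" using cube_cong_cancel[OF cop3 cop[OF w] cop[OF z]] by simp
  next
    assume "[w = z] (mod int p ^ n)"
    then show "[w ^ 3 = x n] (mod int p ^ n)" using z by (meson cong_pow cong_trans)
  qed
next
  fix n z assume "[z ^ 3 = x (Suc n)] (mod int p ^ Suc n)"
  then have "[z ^ 3 = x (Suc n)] (mod int p ^ n)" by (rule cong_dvd_modulus) simp
  then show "[z ^ 3 = x n] (mod int p ^ n)"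
    using Zp_cong[OF assms(3), of n "Suc n"] by (auto intro: cong_trans)
next
  fix y assume "y \<in> Zp p"
  have "pmul p y (pmul p y y) n = y n ^ 3 mod int p ^ n" for n
    unfolding pmul_def by (simp add: mod_mult_right_eq power3_eq_cube mult.assoc)
  then show "pmul p y (pmul p y y) = x \<longleftrightarrow> (\<forall>n. [y n ^ 3 = x n] (mod int p ^ n))"
    using Zp_mod_eq[OF assms(3)] by (simp add: fun_eq_iff cong_def)
qed

lemma poly_cong:
  fixes f :: "int poly"
  assumes "[a = b] (mod m)"
  shows "[poly f a = poly f b] (mod m)"
  by (induction f) (simp_all add: assms cong_add cong_mult)

lemma peval_in_Zp:
  assumes "p > 0" and "x \<in> Zp p"
  shows "peval p f x \<in> Zp p"
  unfolding Zp_def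
proof (intro CollectI allI conjI)
  fix n
  show "0 \<le> peval p f x n" "peval p f x n < int p ^ n" unfolding peval_def using assms(1) by simp_all
  have "[poly f (x (Suc n)) = poly f (x n)] (mod int p ^ n)"
    using Zp_cong[OF assms(2), of n "Suc n"] by (simp add: poly_cong)
  then show "peval p f x (Suc n) mod int p ^ n = peval p f x n"
    unfolding peval_def cong_def by (simp add: mod_mod_cancel le_imp_power_dvd)
qed

section \<open>Three roots of \<open>P\<close> and their cube roots modulo \<open>p ^ n\<close>\<close>

lemma poly_Ptrib: "poly Ptrib x = x ^ 3 - x ^ 2 - x - 1"
  by (simp add: Ptrib_def power2_eq_square power3_eq_cube algebra_simps)

lemma poly_pderiv_Ptrib: "poly (pderiv Ptrib) x = 3 * x ^ 2 - 2 * x - 1"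
  by (simp add: Ptrib_def pderiv_pCons power2_eq_square algebra_simps)

lemma Ptrib_vieta_cong:
  fixes M a1 a2 a3 :: int
  assumes roots: "[poly Ptrib a1 = 0] (mod M)" "[poly Ptrib a2 = 0] (mod M)" "[poly Ptrib a3 = 0] (mod M)"
    and distinct: "coprime (a1 - a2) M" "coprime (a1 - a3) M" "coprime (a2 - a3) M"
  shows "[a1 + a2 + a3 = 1] (mod M)" "[a1 * a2 + a1 * a3 + a2 * a3 = -1] (mod M)"
    "[a1 * a2 * a3 = 1] (mod M)"
  unfolding cong_iff_dvd_diff
proof -
  note roots = roots[unfolded cong_0_iff]
  define S where "S a b = a ^ 2 + a * b + b ^ 2 - a - b - 1" for a b :: int
  have factor: "(a - b) * S a b = poly Ptrib a - poly Ptrib b" for a b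
    unfolding poly_Ptrib S_def by Groebner_Basis.algebra
  have S12: "M dvd S a1 a2"
    by (rule coprime_dvd_mult_cancel[OF distinct(1)]) (use roots factor[of a1 a2] in simp)
  have S13: "M dvd S a1 a3"
    by (rule coprime_dvd_mult_cancel[OF distinct(2)]) (use roots factor[of a1 a3] in simp)
  have "(a2 - a3) * (a1 + a2 + a3 - 1) = S a1 a2 - S a1 a3"
    unfolding S_def by Groebner_Basis.algebra
  then have "M dvd (a2 - a3) * (a1 + a2 + a3 - 1)" using S12 S13 by simp
  then show e1: "M dvd a1 + a2 + a3 - 1" by (rule coprime_dvd_mult_cancel[OF distinct(3)])
  have "a1 * a2 + a1 * a3 + a2 * a3 - - 1 = (a1 + a2) * (a1 + a2 + a3 - 1) - S a1 a2"
    unfolding S_def by Groebner_Basis.algebra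
  then show e2: "M dvd a1 * a2 + a1 * a3 + a2 * a3 - - 1"
    using e1 S12 by simp
  have "a1 * a2 * a3 - 1
      = poly Ptrib a1 - a1 ^ 2 * (a1 + a2 + a3 - 1) + a1 * (a1 * a2 + a1 * a3 + a2 * a3 - - 1)"
    unfolding poly_Ptrib by Groebner_Basis.algebra
  then show "M dvd a1 * a2 * a3 - 1"
    using roots(1) e1 e2 by simp
qed

lemma Ptrib_pderiv_cong:
  fixes M a1 a2 a3 :: int
  assumes "[a1 + a2 + a3 = 1] (mod M)" and "[a1 * a2 + a1 * a3 + a2 * a3 = -1] (mod M)"
  shows "[poly (pderiv Ptrib) a1 = (a1 - a2) * (a1 - a3)] (mod M)"
proof -
  have "poly (pderiv Ptrib) a1 - (a1 - a2) * (a1 - a3)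
      = 2 * a1 * (a1 + a2 + a3 - 1) - (a1 * a2 + a1 * a3 + a2 * a3 - - 1)"
    unfolding poly_pderiv_Ptrib by Groebner_Basis.algebra
  then show ?thesis using assms unfolding cong_iff_dvd_diff by simp
qed

lemma Ptrib_discriminant_cong:
  fixes M a1 a2 a3 :: int
  assumes "[a1 + a2 + a3 = 1] (mod M)" and "[a1 * a2 + a1 * a3 + a2 * a3 = -1] (mod M)"
    and "[a1 * a2 * a3 = 1] (mod M)"
  shows "[((a1 - a2) * (a2 - a3) * (a3 - a1)) ^ 2 = -44] (mod M)"
proof -
  define e1 e2 e3 where "e1 = a1 + a2 + a3" and "e2 = a1 * a2 + a1 * a3 + a2 * a3"
    and "e3 = a1 * a2 * a3"
  have "((a1 - a2) * (a2 - a3) * (a3 - a1)) ^ 2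
      = e1^2 * e2^2 - 4 * e2^3 - 4 * e1^3 * e3 + 18 * e1 * e2 * e3 - 27 * e3^2"
    unfolding e1_def e2_def e3_def by Groebner_Basis.algebra
  also have "[\<dots> = 1^2 * (-1)^2 - 4 * (-1)^3 - 4 * 1^3 * 1 + 18 * 1 * (-1) * 1 - 27 * 1^2] (mod M)"
    using assms unfolding e1_def e2_def e3_def
    by (intro cong_add cong_diff cong_mult cong_pow cong_refl)
  finally show ?thesis by simp
qed

lemma cube_roots_Ptrib_cong:
  fixes m :: nat and a1 a2 a3 b1 b2 b3 :: int
  assumes cube_inj: "coprime 3 (totient m)"
    and e1: "[a1 + a2 + a3 = 1] (mod int m)" and e2: "[a1 * a2 + a1 * a3 + a2 * a3 = -1] (mod int m)"
    and e3: "[a1 * a2 * a3 = 1] (mod int m)"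
    and b: "[b1 ^ 3 = a1] (mod int m)" "[b2 ^ 3 = a2] (mod int m)" "[b3 ^ 3 = a3] (mod int m)"
  defines "s \<equiv> b1 + b2 + b3" and "q \<equiv> b1 * b2 + b1 * b3 + b2 * b3"
  shows "[b1 * b2 * b3 = 1] (mod int m)" and "[s ^ 3 - 3 * s * q + 3 = 1] (mod int m)"
    and "[q ^ 3 - 3 * q * s + 3 = -1] (mod int m)"
proof -
  have "(b1 * b2 * b3) ^ 3 = b1 ^ 3 * b2 ^ 3 * b3 ^ 3" by Groebner_Basis.algebra
  also have "[\<dots> = a1 * a2 * a3] (mod int m)" using b by (intro cong_mult)
  also note e3
  finally have B3: "[(b1 * b2 * b3) ^ 3 = 1 ^ 3] (mod int m)" by simp
  then have "coprime (b1 * b2 * b3) (int m)" using cong_imp_coprime[OF cong_sym[OF B3]] by simp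
  then show B: "[b1 * b2 * b3 = 1] (mod int m)" using cube_cong_cancel[OF cube_inj _ _ B3] by simp
  have "s ^ 3 - 3 * s * q + 3 = s ^ 3 - 3 * s * q + 3 * 1" by simp
  also have "[\<dots> = s ^ 3 - 3 * s * q + 3 * (b1 * b2 * b3)] (mod int m)"
    by (intro cong_add cong_mult cong_refl cong_sym[OF B])
  also have "s ^ 3 - 3 * s * q + 3 * (b1 * b2 * b3) = b1 ^ 3 + b2 ^ 3 + b3 ^ 3"
    unfolding s_def q_def by Groebner_Basis.algebra
  also have "[\<dots> = a1 + a2 + a3] (mod int m)" using b by (intro cong_add)
  finally show "[s ^ 3 - 3 * s * q + 3 = 1] (mod int m)" using e1 by (rule cong_trans)
  have "q ^ 3 - 3 * q * s + 3 = q ^ 3 - 3 * q * s * 1 + 3 * 1 ^ 2" by simp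
  also have "[\<dots> = q ^ 3 - 3 * q * s * (b1 * b2 * b3) + 3 * (b1 * b2 * b3) ^ 2] (mod int m)"
    by (intro cong_add cong_diff cong_mult cong_pow cong_refl cong_sym[OF B])
  also have "q ^ 3 - 3 * q * s * (b1 * b2 * b3) + 3 * (b1 * b2 * b3) ^ 2
      = b1 ^ 3 * b2 ^ 3 + b1 ^ 3 * b3 ^ 3 + b2 ^ 3 * b3 ^ 3"
    unfolding s_def q_def by Groebner_Basis.algebra
  also have "[\<dots> = a1 * a2 + a1 * a3 + a2 * a3] (mod int m)" using b by (intro cong_add cong_mult)
  finally show "[q ^ 3 - 3 * q * s + 3 = -1] (mod int m)" using e2 by (rule cong_trans)
qed

lemma Ptrib_resolvent_no_root_mod_prime:
  fixes D t :: int
  assumes p: "prime p" "p mod 3 = 2" "p \<noteq> 2" "p \<noteq> 11" and disc: "int p dvd D ^ 2 + 44"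
  shows "\<not> int p dvd t ^ 2 - 17 * t - 2"
proof
  assume root: "int p dvd t ^ 2 - 17 * t - 2"
  \<comment> \<open>\<open>-11\<close> and \<open>297 = 3 ^ 3 * 11\<close> would both be squares modulo \<open>p\<close>, hence so would be \<open>-3\<close>\<close>
  have "int p dvd 4 * D ^ 2 * (t ^ 2 - 17 * t - 2) + 297 * (D ^ 2 + 44)"
    using root disc by (simp only: dvd_add dvd_mult)
  also have "4 * D ^ 2 * (t ^ 2 - 17 * t - 2) + 297 * (D ^ 2 + 44) = ((2 * t - 17) * D) ^ 2 + 3 * 66 ^ 2"
    by Groebner_Basis.algebra
  finally have "int p dvd ((2 * t - 17) * D) ^ 2 + 3 * 66 ^ 2" .
  then have "int p dvd 66" by (rule prime_dvd_square_plus_3_square[OF p(1-3)])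
  then have "p = 2 \<or> p = 3 \<or> p = 11" using prime_dvd_2_3_11_product[OF p(1), of 1 1 1] by simp
  then show False using p by auto
qed

lemma Ptrib_cube_root_square_cong:
  fixes p n :: nat and s q D :: int
  assumes p: "prime p" "p mod 3 = 2" "p \<noteq> 2" "p \<noteq> 11"
    and F1: "[s ^ 3 - 3 * s * q + 3 = 1] (mod int p ^ n)"
    and F2: "[q ^ 3 - 3 * q * s + 3 = -1] (mod int p ^ n)"
    and disc: "[D ^ 2 = -44] (mod int p)"
  shows "[q ^ 2 = s] (mod int p ^ n)"
proof -
  define M where "M = int p ^ n"
  define t where "t = s ^ 3"
  have f1: "M dvd s ^ 3 - 3 * s * q + 3 - 1" and f2: "M dvd q ^ 3 - 3 * q * s + 3 - -1"
    using F1 F2 unfolding M_def cong_iff_dvd_diff .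
  have "M dvd (q ^ 3 - 3 * q * s + 3 - -1) - (s ^ 3 - 3 * s * q + 3 - 1)"
    using f1 f2 by (rule dvd_diff[rotated])
  also have "(q ^ 3 - 3 * q * s + 3 - -1) - (s ^ 3 - 3 * s * q + 3 - 1) = q ^ 3 - (t - 2)"
    unfolding t_def by Groebner_Basis.algebra
  finally have q3: "M dvd q ^ 3 - (t - 2)" .
  \<comment> \<open>eliminating \<open>q\<close> from \<open>3 s q = t + 2\<close> and \<open>q ^ 3 = t - 2\<close>\<close>
  have "M dvd ((t + 2) ^ 2 + (t + 2) * (3 * s * q) + (3 * s * q) ^ 2) * (s ^ 3 - 3 * s * q + 3 - 1)
      + 27 * t * (q ^ 3 - (t - 2))"
    using f1 q3 by (simp only: dvd_add dvd_mult)
  also have "((t + 2) ^ 2 + (t + 2) * (3 * s * q) + (3 * s * q) ^ 2) * (s ^ 3 - 3 * s * q + 3 - 1)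
      + 27 * t * (q ^ 3 - (t - 2)) = (t ^ 2 - 17 * t - 2) * (t - 4)"
    unfolding t_def by Groebner_Basis.algebra
  finally have "M dvd (t ^ 2 - 17 * t - 2) * (t - 4)" .
  moreover have "coprime (t ^ 2 - 17 * t - 2) M"
    using Ptrib_resolvent_no_root_mod_prime[OF p] disc
    unfolding M_def cong_iff_dvd_diff coprime_power_right_iff coprime_prime_iff_not_dvd[OF p(1)]
    by simp
  ultimately have t4: "M dvd t - 4" by (rule coprime_dvd_mult_cancel[rotated])
  have "M dvd (q ^ 3 + t - 2) * (q ^ 3 - (t - 2)) + (t - 1) * (t - 4)"
    using q3 t4 by (simp only: dvd_add dvd_mult)
  also have "(q ^ 3 + t - 2) * (q ^ 3 - (t - 2)) + (t - 1) * (t - 4) = (q ^ 2) ^ 3 - s ^ 3"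
    unfolding t_def by Groebner_Basis.algebra
  finally have cubes: "[(q ^ 2) ^ 3 = s ^ 3] (mod int (p ^ n))"
    unfolding M_def cong_iff_dvd_diff by simp
  have "\<not> int p dvd 2 ^ 2 * 3 ^ 0 * 11 ^ 0"
    using prime_dvd_2_3_11_product[OF p(1), of 2 0 0] p by auto
  then have "coprime 4 (int (p ^ n))" by (simp add: coprime_prime_iff_not_dvd[OF p(1)])
  moreover have "[s ^ 3 = 4] (mod int (p ^ n))"
    using t4 unfolding M_def t_def cong_iff_dvd_diff by simp
  ultimately have "coprime (s ^ 3) (int (p ^ n))" by (metis cong_imp_coprime cong_sym)
  moreover from this have "coprime ((q ^ 2) ^ 3) (int (p ^ n))"
    using cubes by (metis cong_imp_coprime cong_sym)
  ultimately show ?thesis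
    using cube_cong_cancel[OF coprime_3_totient_prime_power[OF p(1,2)] _ _ cubes] by simp
qed

lemma weighted_cube_root_sum_cong:
  fixes M a1 a2 a3 b1 b2 b3 v1 v2 v3 :: int
  assumes b: "[b1 ^ 3 = a1] (mod M)" "[b2 ^ 3 = a2] (mod M)" "[b3 ^ 3 = a3] (mod M)"
    and v: "[(a1 - a2) * (a1 - a3) * v1 = 1] (mod M)" "[(a2 - a1) * (a2 - a3) * v2 = 1] (mod M)"
      "[(a3 - a1) * (a3 - a2) * v3 = 1] (mod M)"
    and B: "[b1 * b2 * b3 = 1] (mod M)"
    and Q: "[(b1 * b2 + b1 * b3 + b2 * b3) ^ 2 = b1 + b2 + b3] (mod M)"
    and D: "coprime ((a1 - a2) * (a2 - a3) * (a3 - a1)) M"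
  shows "[a1 * v1 * b1 + a2 * v2 * b2 + a3 * v3 * b3 = 0] (mod M)"
proof -
  define s q where "s = b1 + b2 + b3" and "q = b1 * b2 + b1 * b3 + b2 * b3"
  have "(a1 - a2) * (a2 - a3) * (a3 - a1) * (a1 * v1 * b1 + a2 * v2 * b2 + a3 * v3 * b3)
      = - (a1 * b1 * (a2 - a3) * ((a1 - a2) * (a1 - a3) * v1)
         + a2 * b2 * (a3 - a1) * ((a2 - a1) * (a2 - a3) * v2)
         + a3 * b3 * (a1 - a2) * ((a3 - a1) * (a3 - a2) * v3))"
    by Groebner_Basis.algebra
  also have "[\<dots> = - (a1 * b1 * (a2 - a3) * 1 + a2 * b2 * (a3 - a1) * 1 + a3 * b3 * (a1 - a2) * 1)] (mod M)"
    by (intro cong_minus_minus_iff[THEN iffD2] cong_add cong_mult cong_refl v)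
  also have "- (a1 * b1 * (a2 - a3) * 1 + a2 * b2 * (a3 - a1) * 1 + a3 * b3 * (a1 - a2) * 1)
      = - (a1 * b1 * (a2 - a3) + a2 * b2 * (a3 - a1) + a3 * b3 * (a1 - a2))"
    by simp
  also have "[\<dots> = - (b1 ^ 3 * b1 * (b2 ^ 3 - b3 ^ 3) + b2 ^ 3 * b2 * (b3 ^ 3 - b1 ^ 3)
           + b3 ^ 3 * b3 * (b1 ^ 3 - b2 ^ 3))] (mod M)"
    using b by (intro cong_minus_minus_iff[THEN iffD2] cong_add cong_mult cong_diff cong_refl)
      (simp_all add: cong_sym)
  also have "- (b1 ^ 3 * b1 * (b2 ^ 3 - b3 ^ 3) + b2 ^ 3 * b2 * (b3 ^ 3 - b1 ^ 3)
           + b3 ^ 3 * b3 * (b1 ^ 3 - b2 ^ 3))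
      = (b1 - b2) * (b2 - b3) * (b3 - b1) * (q ^ 2 - s * (b1 * b2 * b3))"
    unfolding s_def q_def by Groebner_Basis.algebra
  also have "[\<dots> = (b1 - b2) * (b2 - b3) * (b3 - b1) * (s - s * 1)] (mod M)"
    unfolding s_def q_def by (intro cong_mult cong_diff cong_refl Q B)
  finally have "M dvd (a1 - a2) * (a2 - a3) * (a3 - a1) * (a1 * v1 * b1 + a2 * v2 * b2 + a3 * v3 * b3)"
    by (simp add: cong_0_iff)
  then show ?thesis unfolding cong_0_iff by (rule coprime_dvd_mult_cancel[OF D])
qed

section \<open>The roots of \<open>P\<close> in \<open>Z_p\<close>\<close>

lemma Ptrib_root_coprime:
  fixes a M :: int
  assumes "[poly Ptrib a = 0] (mod M)"
  shows "coprime a M"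
proof -
  have "poly Ptrib a = a * (a ^ 2 - a - 1) - 1" unfolding poly_Ptrib by Groebner_Basis.algebra
  then have "[1 = a * (a ^ 2 - a - 1)] (mod M)"
    using assms by (simp only: cong_iff_dvd_diff dvd_diff_commute diff_0_right)
  then have "coprime (a * (a ^ 2 - a - 1)) M" by (rule cong_imp_coprime) simp
  then show ?thesis by simp
qed

lemma Ptrib_separable_mod_prime:
  fixes a :: int
  assumes p: "prime p" "p \<noteq> 2" "p \<noteq> 11" and root: "[poly Ptrib a = 0] (mod int p)"
  shows "coprime (poly (pderiv Ptrib) a) (int p)"
proof -
  \<comment> \<open>the resultant of \<open>P\<close> and \<open>P'\<close> is \<open>-44\<close>\<close>
  have "- (2 ^ 2 * 3 ^ 0 * 11 ^ 1)
      = (46 - 24 * a) * poly Ptrib a + (8 * a ^ 2 - 18 * a - 2) * poly (pderiv Ptrib) a"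
    unfolding poly_Ptrib poly_pderiv_Ptrib by Groebner_Basis.algebra
  moreover have "\<not> int p dvd 2 ^ 2 * 3 ^ 0 * 11 ^ 1"
    using prime_dvd_2_3_11_product[OF p(1), of 2 0 1] p by auto
  ultimately have "\<not> int p dvd poly (pderiv Ptrib) a"
    using root unfolding cong_0_iff by (metis dvd_add dvd_minus_iff dvd_mult)
  then show ?thesis by (simp add: coprime_prime_iff_not_dvd[OF p(1)])
qed

lemma Ptrib_root_lift_unique:
  fixes a b :: int
  assumes p: "prime p" "p \<noteq> 2" "p \<noteq> 11"
    and roots: "[poly Ptrib a = 0] (mod int p ^ n)" "[poly Ptrib b = 0] (mod int p ^ n)"
    and ab: "[a = b] (mod int p)"
  shows "[a = b] (mod int p ^ n)"
proof (cases "n = 0")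
  case False
  define S where "S = a ^ 2 + a * b + b ^ 2 - a - b - 1"
  have "[poly Ptrib a = 0] (mod int p)"
    using roots(1) by (rule cong_dvd_modulus) (use False in \<open>simp add: dvd_power\<close>)
  then have "coprime (poly (pderiv Ptrib) a) (int p)" by (rule Ptrib_separable_mod_prime[OF p])
  moreover have "poly (pderiv Ptrib) a - S = (a - b) * (b + 2 * a - 1)"
    unfolding poly_pderiv_Ptrib S_def by Groebner_Basis.algebra
  then have "[poly (pderiv Ptrib) a = S] (mod int p)"
    using ab unfolding cong_iff_dvd_diff by simp
  ultimately have "coprime S (int p)" by (rule cong_imp_coprime[rotated])
  then have "coprime S (int p ^ n)" by simp
  moreover have "(a - b) * S = poly Ptrib a - poly Ptrib b"
    unfolding poly_Ptrib S_def by Groebner_Basis.algebra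
  then have "int p ^ n dvd S * (a - b)"
    using roots unfolding cong_0_iff by (simp add: mult.commute)
  ultimately show ?thesis unfolding cong_iff_dvd_diff by (rule coprime_dvd_mult_cancel)
qed simp

lemma Lam_in_Zp: "l \<in> Lam p \<Longrightarrow> l \<in> Zp p"
  unfolding Lam_def by simp

lemma Lam_root_cong:
  assumes "l \<in> Lam p"
  shows "[poly Ptrib (l n) = 0] (mod int p ^ n)"
  using assms unfolding Lam_def peval_def pzero_def by (simp add: fun_eq_iff cong_def)

lemma Lam_distinct_coprime:
  assumes p: "prime p" "p \<noteq> 2" "p \<noteq> 11"
    and l: "l1 \<in> Lam p" "l2 \<in> Lam p" "l1 \<noteq> l2"
  shows "coprime (l1 n - l2 n) (int p ^ n)"
proof -
  have level: "[l1 k - l2 k = l1 1 - l2 1] (mod int p)" if "k \<ge> 1" for k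
    using Zp_cong[OF Lam_in_Zp[OF l(1)] that] Zp_cong[OF Lam_in_Zp[OF l(2)] that]
    by (simp add: cong_diff)
  have "coprime (l1 1 - l2 1) (int p)"
  proof (rule ccontr)
    assume "\<not> coprime (l1 1 - l2 1) (int p)"
    then have "[l1 k - l2 k = 0] (mod int p)" if "k \<ge> 1" for k
      using level[OF that] by (simp add: coprime_prime_iff_not_dvd[OF p(1)] cong_0_iff cong_dvd_iff)
    then have "[l1 k = l2 k] (mod int p ^ k)" for k
      using Ptrib_root_lift_unique[OF p Lam_root_cong[OF l(1)] Lam_root_cong[OF l(2)]]
      by (cases "k = 0") (simp_all add: cong_diff_iff_cong_0)
    then have "l1 = l2" using Zp_eqI Lam_in_Zp l(1,2) by blast
    then show False using l(3) by simp
  qed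
  then show ?thesis
    using level[of n] by (cases "n = 0") (simp_all add: coprime_cong_cong_left)
qed

lemma Ptrib_weighted_cube_root_sum_cong:
  fixes p n :: nat and a1 a2 a3 v1 v2 v3 b1 b2 b3 :: int
  assumes p: "prime p" "p mod 3 = 2" "p \<noteq> 2" "p \<noteq> 11"
    and roots: "[poly Ptrib a1 = 0] (mod int p ^ n)" "[poly Ptrib a2 = 0] (mod int p ^ n)"
      "[poly Ptrib a3 = 0] (mod int p ^ n)"
    and distinct: "coprime (a1 - a2) (int p ^ n)" "coprime (a1 - a3) (int p ^ n)"
      "coprime (a2 - a3) (int p ^ n)"
    and v: "[poly (pderiv Ptrib) a1 * v1 = 1] (mod int p ^ n)"
      "[poly (pderiv Ptrib) a2 * v2 = 1] (mod int p ^ n)"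
      "[poly (pderiv Ptrib) a3 * v3 = 1] (mod int p ^ n)"
    and b: "[b1 ^ 3 = a1] (mod int p ^ n)" "[b2 ^ 3 = a2] (mod int p ^ n)"
      "[b3 ^ 3 = a3] (mod int p ^ n)"
  shows "[a1 * v1 * b1 + a2 * v2 * b2 + a3 * v3 * b3 = 0] (mod int p ^ n)"
proof (cases "n = 0")
  case False
  define M where "M = int p ^ n"
  have Mnat: "M = int (p ^ n)" unfolding M_def by simp
  note hyps = roots[folded M_def] v[folded M_def] b[folded M_def]
  note vieta = Ptrib_vieta_cong[OF hyps(1-3) distinct[folded M_def]]
  have "[poly (pderiv Ptrib) a1 = (a1 - a2) * (a1 - a3)] (mod M)"
    "[poly (pderiv Ptrib) a2 = (a2 - a1) * (a2 - a3)] (mod M)"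
    "[poly (pderiv Ptrib) a3 = (a3 - a1) * (a3 - a2)] (mod M)"
    by (rule Ptrib_pderiv_cong; use vieta in \<open>simp add: ac_simps\<close>)+
  then have u: "[(a1 - a2) * (a1 - a3) * v1 = 1] (mod M)" "[(a2 - a1) * (a2 - a3) * v2 = 1] (mod M)"
    "[(a3 - a1) * (a3 - a2) * v3 = 1] (mod M)"
    using hyps(4-6) by (meson cong_scalar_right cong_sym cong_trans)+
  have cubes: "[b1 * b2 * b3 = 1] (mod M)"
    "[(b1 + b2 + b3) ^ 3 - 3 * (b1 + b2 + b3) * (b1 * b2 + b1 * b3 + b2 * b3) + 3 = 1] (mod M)"
    "[(b1 * b2 + b1 * b3 + b2 * b3) ^ 3 - 3 * (b1 * b2 + b1 * b3 + b2 * b3) * (b1 + b2 + b3) + 3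
      = -1] (mod M)"
    using cube_roots_Ptrib_cong[of "p ^ n", folded Mnat,
        OF coprime_3_totient_prime_power[OF p(1,2)] vieta hyps(7-9)] .
  have "[((a1 - a2) * (a2 - a3) * (a3 - a1)) ^ 2 = -44] (mod int p)"
    using Ptrib_discriminant_cong[OF vieta] unfolding M_def
    by (rule cong_dvd_modulus) (use False in \<open>simp add: dvd_power\<close>)
  then have "[(b1 * b2 + b1 * b3 + b2 * b3) ^ 2 = b1 + b2 + b3] (mod M)"
    using Ptrib_cube_root_square_cong[OF p cubes(2,3)[unfolded M_def]] unfolding M_def by blast
  moreover have "coprime (a3 - a1) M"
    using distinct(2) unfolding M_def by (metis coprime_minus_left_iff minus_diff_eq)
  then have "coprime ((a1 - a2) * (a2 - a3) * (a3 - a1)) M"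
    using distinct False unfolding M_def by simp
  ultimately show ?thesis
    using weighted_cube_root_sum_cong[OF hyps(7-9) u cubes(1)] unfolding M_def by blast
qed simp

lemma Lam_pderiv_pinv_cong:
  assumes p: "prime p" "p \<noteq> 2" "p \<noteq> 11" and l: "l \<in> Lam p"
  shows "[poly (pderiv Ptrib) (l n) * pinv p (peval p (pderiv Ptrib) l) n = 1] (mod int p ^ n)"
proof -
  have p0: "p > 0" using p(1) by (simp add: prime_gt_0_nat)
  have "[poly Ptrib (l 1) = 0] (mod int p)" using Lam_root_cong[OF l, of 1] by simp
  then have "coprime (peval p (pderiv Ptrib) l 1) (int p)"
    using Ptrib_separable_mod_prime[OF p] p0 unfolding peval_def by (simp add: coprime_mod_left_iff)
  then have "[peval p (pderiv Ptrib) l n * pinv p (peval p (pderiv Ptrib) l) n = 1] (mod int p ^ n)"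
    by (rule pinv_cong[OF p0 peval_in_Zp[OF p0 Lam_in_Zp[OF l]]])
  then show ?thesis unfolding peval_def by (simp add: cong_def mod_mult_left_eq)
qed

lemma Lam_pcbrt_cong:
  assumes p: "prime p" "p mod 3 = 2" and l: "l \<in> Lam p"
  shows "[pcbrt p l n ^ 3 = l n] (mod int p ^ n)"
  using Ptrib_root_coprime Lam_root_cong[OF l, of 1]
  by (intro pcbrt_cong[OF p Lam_in_Zp[OF l]]) simp

theorem proposition15:
  fixes p :: nat
  assumes "prime p" and "p \<noteq> 2" and "p \<noteq> 11" and "p mod 3 = 2"
    and "card (Lam p) = 3"
  shows "psum p (\<lambda>l. pmul p (clam p l) (pcbrt p l)) (Lam p) = pzero p"
proof
  fix n
  note p = assms(1,4,2,3)
  obtain l1 l2 l3 where L: "Lam p = {l1, l2, l3}" and ne: "l1 \<noteq> l2" "l1 \<noteq> l3" "l2 \<noteq> l3"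
    using assms(5) card_3_iff by metis
  have l: "l1 \<in> Lam p" "l2 \<in> Lam p" "l3 \<in> Lam p" using L by auto
  define w where "w l = l n * pinv p (peval p (pderiv Ptrib) l) n * pcbrt p l n" for l
  have "[pmul p (clam p l) (pcbrt p l) n = w l] (mod int p ^ n)" for l
    unfolding pmul_def clam_def w_def cong_def by (simp add: mod_mult_left_eq)
  then have "[(\<Sum>l\<in>Lam p. pmul p (clam p l) (pcbrt p l) n) = (\<Sum>l\<in>Lam p. w l)] (mod int p ^ n)"
    by (rule cong_sum)
  also have "(\<Sum>l\<in>Lam p. w l) = w l1 + w l2 + w l3" using ne unfolding L by (simp add: add.assoc)
  also have "[w l1 + w l2 + w l3 = 0] (mod int p ^ n)"
    unfolding w_def
    by (rule Ptrib_weighted_cube_root_sum_cong[OF p Lam_root_cong[OF l(1)] Lam_root_cong[OF l(2)]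
          Lam_root_cong[OF l(3)] Lam_distinct_coprime[OF p(1,3,4) l(1,2) ne(1)]
          Lam_distinct_coprime[OF p(1,3,4) l(1,3) ne(2)] Lam_distinct_coprime[OF p(1,3,4) l(2,3) ne(3)]
          Lam_pderiv_pinv_cong[OF p(1,3,4) l(1)] Lam_pderiv_pinv_cong[OF p(1,3,4) l(2)]
          Lam_pderiv_pinv_cong[OF p(1,3,4) l(3)]
          Lam_pcbrt_cong[OF p(1,2) l(1)] Lam_pcbrt_cong[OF p(1,2) l(2)] Lam_pcbrt_cong[OF p(1,2) l(3)]])
  finally show "psum p (\<lambda>l. pmul p (clam p l) (pcbrt p l)) (Lam p) n = pzero p n"
    unfolding psum_def pzero_def by (simp add: cong_0_iff)
qed

end
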